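(* Let $\mathcal{P}$ be a finite set of passwords, let $R_1,\dots,R_m\subseteq\mathcal{P}$ be positive rules, and let $\ell$ be a ranking (total order) of $\mathcal{P}$. For $S\subseteq[m]$ let $\mathcal{A}_S=\bigcup_{i\in S}R_i$, and let $\ell(\mathcal{A}_S)$ denote the $\ell$-most-preferred password in $\mathcal{A}_S$ (if $\mathcal{A}_S\neq\emptyset$). Consider the procedure Reduce: set $S_0=[m]$, $i=0$, and $\hat\ell$ the empty list; while $S_i\neq\emptyset$, let $w=\ell(\mathcal{A}_{S_i})$, append $w$ to $\hat\ell$, set $S_{i+1}=S_i\setminus\{j : w\in R_j\}$ and increase $i$ by one; finally output $\hat\ell$. Then Reduce makes at most $m$ queries of the form $\ell(\mathcal{A}_{S})$ and at most $m^2$ membership queries ("is $w\in R_j$?"), and outputs a list $\hat\ell$ of at most $m$ passwords such that for every $S\subseteq[m]$ (with $\mathcal{A}_S\neq\emptyset$) the first password of $\hat\ell$ lying in $\mathcal{A}_S$ equals $\ell(\mathcal{A}_S)$.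
   Context: A ranking of $\mathcal{P}$ represents a user's preferences: the user prefers earlier passwords. Under a password policy $\mathcal{A}\subseteq\mathcal{P}$ a user picks the most preferred password in $\mathcal{A}$. In the positive rules setting, the policy determined by a set $S\subseteq[m]$ of active rules is $\mathcal{A}_S=\bigcup_{i\in S}R_i$. *)

theory Defs
  imports Main "HOL-Library.While_Combinator"
begin

text \<open>A ranking of the password set is a duplicate-free list enumerating it;
  earlier entries are preferred. first_in xs A is the first entry of xs lying in A,
  i.e. the most preferred password of A with respect to xs.\<close>
definition first_in :: "'a list \<Rightarrow> 'a set \<Rightarrow> 'a" where
  "first_in xs A = hd (filter (\<lambda>x. x \<in> A) xs)"

definition policy :: "(nat \<Rightarrow> 'a set) \<Rightarrow> nat set \<Rightarrow> 'a set" where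
  "policy R S = (\<Union>i\<in>S. R i)"

text \<open>State: (current S_i, output list so far,
  number of queries of the form l(A_S), number of membership queries).
  The membership tests "w \<in> R_j" are performed for the j in S_i.\<close>
definition reduce_step ::
  "(nat \<Rightarrow> 'a set) \<Rightarrow> 'a list \<Rightarrow> nat set \<times> 'a list \<times> nat \<times> nat \<Rightarrow> nat set \<times> 'a list \<times> nat \<times> nat" where
  "reduce_step R rank st =
     (case st of (S, L, q, r) \<Rightarrow>
        (let w = first_in rank (policy R S)
         in (S - {j \<in> S. w \<in> R j}, L @ [w], Suc q, r + card S)))"

text \<open>The procedure Reduce with S_0 = [m] = {1..m}; None means non-termination.\<close>
definition reduce ::
  "(nat \<Rightarrow> 'a set) \<Rightarrow> nat \<Rightarrow> 'a list \<Rightarrow> (nat set \<times> 'a list \<times> nat \<times> nat) option" where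
  "reduce R m rank =
     while_option (\<lambda>(S, _, _, _). S \<noteq> {}) (reduce_step R rank) ({1..m}, [], 0, 0)"

end

theory Submission
  imports Defs
begin

text \<open>Each round of Reduce deactivates every rule containing the password \<open>w\<close> it just
  output, and \<open>w\<close> lies in at least one active rule, so there are at most \<open>m\<close> rounds,
  each with at most \<open>m\<close> membership tests. Correctness is an invariant: every
  deactivated rule meets the output list \<open>L\<close>, and \<open>L\<close> agrees with the ranking on
  every policy it meets. If a policy \<open>A\<^sub>T\<close> first meets \<open>L\<close> in the new entry
  \<open>w = \<ell>(A\<^sub>S)\<close>, then no rule of \<open>T\<close> is deactivated yet, so \<open>A\<^sub>T \<subseteq> A\<^sub>S\<close>, and the
  \<open>\<ell>\<close>-best password of \<open>A\<^sub>S\<close> lying in \<open>A\<^sub>T\<close> is also the \<open>\<ell>\<close>-best of \<open>A\<^sub>T\<close>.\<close>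

lemma first_in_append:
  "first_in (xs @ ys) A = (if \<exists>x\<in>set xs. x \<in> A then first_in xs A else first_in ys A)"
  unfolding first_in_def by (auto simp: filter_empty_conv)

lemma first_in_in: "A \<inter> set xs \<noteq> {} \<Longrightarrow> first_in xs A \<in> A"
  unfolding first_in_def by (induction xs) auto

lemma first_in_subset: "A \<subseteq> B \<Longrightarrow> first_in xs B \<in> A \<Longrightarrow> first_in xs A = first_in xs B"
  by (induction xs) (auto simp: first_in_def)

lemma first_in_snoc_first_in:
  assumes "A \<subseteq> B" and "first_in xs B \<in> A" and "set L \<inter> A = {}"
  shows "first_in (L @ [first_in xs B]) A = first_in xs A"
proof -
  have "first_in (L @ [first_in xs B]) A = first_in [first_in xs B] A"
    using assms(3) by (auto simp: first_in_append)
  also have "\<dots> = first_in xs B"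
    using assms(2) by (simp add: first_in_def)
  finally show ?thesis
    using first_in_subset[OF assms(1,2)] by simp
qed

lemma policy_mono: "T \<subseteq> S \<Longrightarrow> policy R T \<subseteq> policy R S"
  unfolding policy_def by blast

lemma first_in_policy_in_policy:
  assumes "\<forall>j\<in>S. R j \<subseteq> set rank \<and> R j \<noteq> {}" and "S \<noteq> {}"
  shows "first_in rank (policy R S) \<in> policy R S"
proof (rule first_in_in)
  from assms show "policy R S \<inter> set rank \<noteq> {}"
    unfolding policy_def by blast
qed

definition reduce_inv ::
  "(nat \<Rightarrow> 'a set) \<Rightarrow> nat \<Rightarrow> 'a list \<Rightarrow> nat set \<times> 'a list \<times> nat \<times> nat \<Rightarrow> bool" where
  "reduce_inv R m rank = (\<lambda>(S, L, q, r).
     S \<subseteq> {1..m} \<and> q = length L \<and> length L + card S \<le> m \<and> r \<le> length L * m \<and>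
     (\<forall>j\<in>{1..m} - S. R j \<inter> set L \<noteq> {}) \<and>
     (\<forall>T\<subseteq>{1..m}. policy R T \<inter> set L \<noteq> {} \<longrightarrow>
        first_in L (policy R T) = first_in rank (policy R T)))"

lemma card_deactivate_less:
  assumes "\<forall>j\<in>S. R j \<subseteq> set rank \<and> R j \<noteq> {}" and "finite S" and "S \<noteq> {}"
  shows "card (S - {j \<in> S. first_in rank (policy R S) \<in> R j}) < card S"
proof -
  obtain j where "j \<in> S" "first_in rank (policy R S) \<in> R j"
    using first_in_policy_in_policy[OF assms(1,3)] unfolding policy_def by blast
  then show ?thesis
    using assms(2) by (intro psubset_card_mono) auto
qed

lemma subset_if_policy_disjoint:
  assumes "T \<subseteq> U" and "\<forall>j\<in>U - S. R j \<inter> X \<noteq> {}" and "policy R T \<inter> X = {}"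
  shows "T \<subseteq> S"
proof
  fix j assume "j \<in> T"
  then have "R j \<inter> X = {}"
    using assms(3) unfolding policy_def by blast
  then show "j \<in> S"
    using assms(1,2) \<open>j \<in> T\<close> by blast
qed

lemma reduce_step_inv:
  assumes R: "\<forall>j\<in>{1..m}. R j \<subseteq> set rank \<and> R j \<noteq> {}"
    and inv: "reduce_inv R m rank (S, L, q, r)" and "S \<noteq> {}"
  shows "reduce_inv R m rank (reduce_step R rank (S, L, q, r))"
proof -
  define w where "w = first_in rank (policy R S)"
  define S' where "S' = S - {j \<in> S. w \<in> R j}"
  from inv have S: "S \<subseteq> {1..m}" and len: "length L + card S \<le> m"
    and covered: "\<forall>j\<in>{1..m} - S. R j \<inter> set L \<noteq> {}"
    and agrees: "\<forall>T\<subseteq>{1..m}. policy R T \<inter> set L \<noteq> {} \<longrightarrow>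
                   first_in L (policy R T) = first_in rank (policy R T)"
    unfolding reduce_inv_def by auto
  have step: "reduce_step R rank (S, L, q, r) = (S', L @ [w], Suc q, r + card S)"
    unfolding reduce_step_def Let_def w_def S'_def by simp
  have "\<forall>j\<in>S. R j \<subseteq> set rank \<and> R j \<noteq> {}"
    using R S by blast
  from card_deactivate_less[OF this finite_subset[OF S finite_atLeastAtMost] \<open>S \<noteq> {}\<close>]
  have "card S' < card S"
    unfolding S'_def w_def .
  moreover have "card S \<le> m"
    using card_mono[OF _ S] by simp
  moreover have "first_in (L @ [w]) (policy R T) = first_in rank (policy R T)"
    if T: "T \<subseteq> {1..m}" and meets: "policy R T \<inter> set (L @ [w]) \<noteq> {}" for T
  proof (cases "policy R T \<inter> set L = {}")
    case True
    have "policy R T \<subseteq> policy R S"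
      using subset_if_policy_disjoint[OF T covered True] by (rule policy_mono)
    moreover have "w \<in> policy R T"
      using True meets by auto
    ultimately show ?thesis
      using first_in_snoc_first_in[of "policy R T" "policy R S" rank L] True
      unfolding w_def by (simp add: Int_commute)
  next
    case False
    then show ?thesis
      using agrees T by (auto simp: first_in_append)
  qed
  moreover have "S' \<subseteq> {1..m}" and "\<forall>j\<in>{1..m} - S'. R j \<inter> set (L @ [w]) \<noteq> {}"
    using S covered unfolding S'_def by auto
  ultimately show ?thesis
    using inv len unfolding step reduce_inv_def by auto
qed

lemma reduce_terminates:
  assumes "\<forall>j\<in>{1..m}. R j \<subseteq> set rank \<and> R j \<noteq> {}"
  shows "\<exists>L q r. reduce R m rank = Some ({}, L, q, r) \<and> reduce_inv R m rank ({}, L, q, r)"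
proof -
  let ?b = "\<lambda>(S, _::'a list, _::nat, _::nat). S \<noteq> {}"
  have step: "reduce_inv R m rank (reduce_step R rank s) \<and>
      card (fst (reduce_step R rank s)) < card (fst s)"
    if inv: "reduce_inv R m rank s" and active: "?b s" for s
  proof -
    obtain S L q r where s: "s = (S, L, q, r)"
      by (cases s)
    have S: "S \<subseteq> {1..m}"
      using inv s by (simp add: reduce_inv_def)
    then have "\<forall>j\<in>S. R j \<subseteq> set rank \<and> R j \<noteq> {}"
      using assms by blast
    from card_deactivate_less[OF this finite_subset[OF S finite_atLeastAtMost]]
    show ?thesis
      using reduce_step_inv[OF assms] inv active s by (simp add: reduce_step_def Let_def)
  qed
  have init: "reduce_inv R m rank ({1..m}, [], 0, 0)"
    unfolding reduce_inv_def by auto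
  obtain t where t: "reduce R m rank = Some t"
    unfolding reduce_def using measure_while_option_Some[of _ ?b, OF step init] by blast
  have "reduce_inv R m rank t"
    using t step init unfolding reduce_def by (blast intro: while_option_rule)
  moreover have "\<not> ?b t"
    using t unfolding reduce_def by (rule while_option_stop)
  ultimately show ?thesis
    using t by (cases t) auto
qed

theorem claim3p1:
  fixes P :: "'a set" and R :: "nat \<Rightarrow> 'a set" and m :: nat and rank :: "'a list"
  assumes "finite P"
    and "\<forall>j\<in>{1..m}. R j \<subseteq> P \<and> R j \<noteq> {}"
    and "distinct rank" and "set rank = P"
  shows "\<exists>S' L q r. reduce R m rank = Some (S', L, q, r) \<and>
           q \<le> m \<and> r \<le> m ^ 2 \<and> length L \<le> m \<and>
           (\<forall>S \<subseteq> {1..m}. policy R S \<noteq> {} \<longrightarrow>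
              (\<exists>x\<in>set L. x \<in> policy R S) \<and>
              first_in L (policy R S) = first_in rank (policy R S))"
proof -
  obtain L q r where red: "reduce R m rank = Some ({}, L, q, r)"
    and inv: "reduce_inv R m rank ({}, L, q, r)"
    using reduce_terminates assms(2,4) by blast
  from inv have len: "q = length L" "length L \<le> m" "r \<le> length L * m"
    and covered: "\<forall>j\<in>{1..m}. R j \<inter> set L \<noteq> {}"
    and agrees: "\<forall>T\<subseteq>{1..m}. policy R T \<inter> set L \<noteq> {} \<longrightarrow>
                   first_in L (policy R T) = first_in rank (policy R T)"
    unfolding reduce_inv_def by auto
  have "r \<le> m ^ 2"
    using order_trans[OF len(3) mult_le_mono1[OF len(2)]] by (simp add: power2_eq_square)
  moreover have "(\<exists>x\<in>set L. x \<in> policy R S) \<and> first_in L (policy R S) = first_in rank (policy R S)"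
    if "S \<subseteq> {1..m}" and "policy R S \<noteq> {}" for S
  proof -
    have "policy R S \<inter> set L \<noteq> {}"
      using that covered unfolding policy_def by blast
    then show ?thesis
      using agrees that(1) by blast
  qed
  ultimately show ?thesis
    using red len(1,2) by blast
qed

end
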